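(* Consider momentum gradient flow with parameter $\lambda>0$ on a 2-layer diagonal linear network as described in the context. Assume the trajectory $(u_t,v_t)$ is bounded and that the asymptotic balancedness $\Delta_\infty=\lim_{t\to\infty}\Delta_t$ has nonzero coordinates. Then there exists $T\ge0$ such that for all $t\ge T$, $\Delta_t$ has all coordinates positive, and the predictors $\theta_t=u_t\odot v_t$ follow a momentum mirror flow with time-varying potentials $\Phi_t$: $$\lambda\frac{\mathrm{d}^2\nabla\Phi_t(\theta_t)}{\mathrm{d}t^2}+\frac{\mathrm{d}\nabla\Phi_t(\theta_t)}{\mathrm{d}t}+\nabla L(\theta_t)=0,\qquad t\ge T.$$ Furthermore, if the balancedness $\Delta_t$ has nonzero coordinates for all $t\in[0,+\infty]$, this momentum mirror flow holds for every $t\ge0$.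
   Context: Data $x_1,\dots,x_n\in\mathbb{R}^d$, $y\in\mathbb{R}^n$, loss $L(\theta)=\frac{1}{2n}\sum_{i=1}^n(y_i-\langle x_i,\theta\rangle)^2$. Vector operations are coordinate-wise. Momentum gradient flow on the diagonal linear network: $(u_t,v_t)$ solves $\lambda\ddot u_t+\dot u_t+\nabla L(\theta_t)\odot v_t=0$, $\lambda\ddot v_t+\dot v_t+\nabla L(\theta_t)\odot u_t=0$, $\theta_t=u_t\odot v_t$, with $\dot u_0=\dot v_0=0$ and $|u_0^2-v_0^2|$ having all coordinates nonzero. $w_{\pm,t}=u_t\pm v_t$, $\Delta_t=|u_t^2-v_t^2|=|w_{+,t}w_{-,t}|$. Hyperbolic entropy: for $\Delta\in(0,\infty)^d$, $\psi_\Delta(\theta)=\frac14\sum_{i=1}^d\big(2\theta_i\mathrm{arcsinh}(2\theta_i/\Delta_i)-\sqrt{4\theta_i^2+\Delta_i^2}+\Delta_i\big)$. The potentials are defined (for $t$ with $\Delta_t>0$) by $\Phi_t(\theta)=\psi_{\Delta_t}(\theta)-\langle\phi_t,\theta\rangle$, where $\xi_t=-\int_0^t\nabla L(\theta_s)(1-e^{-(t-s)/\lambda})\,\mathrm{d}s$, $\alpha_{\pm,t}=w_{\pm,t}\odot\exp(\mp\xi_t)$, and $\phi_t=\frac12\mathrm{arcsinh}\Big(\frac{\alpha_{+,t}^2-\alpha_{-,t}^2}{2\Delta_t}\Big)$. *)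

theory Defs
  imports "HOL-Analysis.Analysis"
begin

text \<open>Coordinate-wise operations on real^'d: the product x * y on vec is componentwise
 (vector_mult_component). Gradient = vector of partial derivatives.\<close>

definition grad :: "(real^'d \<Rightarrow> real) \<Rightarrow> real^'d \<Rightarrow> real^'d" where
  "grad f x = (\<chi> i. deriv (\<lambda>s. f (x + s *\<^sub>R axis i 1)) 0)"

text \<open>Square loss; row i of X is the data point x_i, n = CARD('n).\<close>
definition sqloss :: "real^'d^'n \<Rightarrow> real^'n \<Rightarrow> real^'d \<Rightarrow> real" where
  "sqloss X y \<theta> = (1 / (2 * real CARD('n))) * (\<Sum>i\<in>UNIV. (y $ i - inner (X $ i) \<theta>)\<^sup>2)"

definition Delta :: "(real \<Rightarrow> real^'d) \<Rightarrow> (real \<Rightarrow> real^'d) \<Rightarrow> real \<Rightarrow> real^'d" where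
  "Delta u v t = (\<chi> i. \<bar>(u t $ i)\<^sup>2 - (v t $ i)\<^sup>2\<bar>)"

definition hyp_entropy :: "real^'d \<Rightarrow> real^'d \<Rightarrow> real" where
  "hyp_entropy D \<theta> = (1/4) * (\<Sum>i\<in>UNIV. 2 * \<theta> $ i * arsinh (2 * \<theta> $ i / D $ i)
        - sqrt (4 * (\<theta> $ i)\<^sup>2 + (D $ i)\<^sup>2) + D $ i)"

definition xi :: "(real^'d \<Rightarrow> real) \<Rightarrow> real \<Rightarrow> (real \<Rightarrow> real^'d) \<Rightarrow> (real \<Rightarrow> real^'d) \<Rightarrow> real \<Rightarrow> real^'d" where
  "xi L lam u v t = - integral {0..t} (\<lambda>s. (1 - exp (- (t - s) / lam)) *\<^sub>R grad L (u s * v s))"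

definition alpha_plus :: "(real^'d \<Rightarrow> real) \<Rightarrow> real \<Rightarrow> (real \<Rightarrow> real^'d) \<Rightarrow> (real \<Rightarrow> real^'d) \<Rightarrow> real \<Rightarrow> real^'d" where
  "alpha_plus L lam u v t = (\<chi> i. (u t $ i + v t $ i) * exp (- (xi L lam u v t $ i)))"

definition alpha_minus :: "(real^'d \<Rightarrow> real) \<Rightarrow> real \<Rightarrow> (real \<Rightarrow> real^'d) \<Rightarrow> (real \<Rightarrow> real^'d) \<Rightarrow> real \<Rightarrow> real^'d" where
  "alpha_minus L lam u v t = (\<chi> i. (u t $ i - v t $ i) * exp (xi L lam u v t $ i))"

definition phi :: "(real^'d \<Rightarrow> real) \<Rightarrow> real \<Rightarrow> (real \<Rightarrow> real^'d) \<Rightarrow> (real \<Rightarrow> real^'d) \<Rightarrow> real \<Rightarrow> real^'d" where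
  "phi L lam u v t = (\<chi> i. (1/2) * arsinh (((alpha_plus L lam u v t $ i)\<^sup>2 - (alpha_minus L lam u v t $ i)\<^sup>2)
                                 / (2 * Delta u v t $ i)))"

definition Phi :: "(real^'d \<Rightarrow> real) \<Rightarrow> real \<Rightarrow> (real \<Rightarrow> real^'d) \<Rightarrow> (real \<Rightarrow> real^'d) \<Rightarrow> real \<Rightarrow> real^'d \<Rightarrow> real" where
  "Phi L lam u v t \<theta> = hyp_entropy (Delta u v t) \<theta> - inner (phi L lam u v t) \<theta>"

definition momentum_mirror_flow_from ::
  "(real^'d \<Rightarrow> real) \<Rightarrow> real \<Rightarrow> (real \<Rightarrow> real^'d) \<Rightarrow> (real \<Rightarrow> real^'d) \<Rightarrow> real \<Rightarrow> bool" where
  "momentum_mirror_flow_from L lam u v T \<longleftrightarrow>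
     (\<exists>G' G''. \<forall>t\<ge>T.
        ((\<lambda>s. grad (Phi L lam u v s) (u s * v s)) has_vector_derivative G' t) (at t within {T..}) \<and>
        (G' has_vector_derivative G'' t) (at t within {T..}) \<and>
        lam *\<^sub>R G'' t + G' t + grad L (u t * v t) = 0)"

end

theory Submission
  imports Defs
begin

(* Wherever Delta_t > 0 the mirror map of the potential at theta_t is exactly xi_t: coordinatewise,
   (1/2) arsinh (2 theta / Delta) = (1/2) ln |w_+ / w_-|, while the reweighting by exp (-+ xi) makes
   phi_t = (1/2) ln |alpha_+ / alpha_-| = (1/2) ln |w_+ / w_-| - xi_t.  The kernel 1 - exp (-(t - s) / lam)
   is the impulse response of lam x'' + x' = f started at rest, so xi_t solves
   lam xi'' + xi' + grad L (theta_t) = 0.  Hence the momentum mirror flow holds on any half-line where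
   Delta_t > 0, which is eventually the case because Delta_t >= 0 tends to Delta_inf with nonzero
   coordinates.  The dynamics of (u, v) enter only through the continuity of t -> grad L (theta_t). *)

lemma has_real_derivative_arsinh [derivative_intros]:
  assumes "(f has_real_derivative f') (at x within S)"
  shows "((\<lambda>x. arsinh (f x)) has_real_derivative f' / sqrt ((f x)\<^sup>2 + 1)) (at x within S)"
  using DERIV_chain2[OF arsinh_real_has_field_derivative assms] by simp

lemma hyp_entropy_term_has_real_derivative:
  fixes D x :: real
  assumes "D > 0"
  shows "((\<lambda>x. 2 * x * arsinh (2 * x / D) - sqrt (4 * x\<^sup>2 + D\<^sup>2) + D)
     has_real_derivative 2 * arsinh (2 * x / D)) (at x)"
proof -
  have pos: "4 * x\<^sup>2 + D\<^sup>2 > 0" using assms by (simp add: add_nonneg_pos)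
  have "(2 * x / D)\<^sup>2 + 1 = (4 * x\<^sup>2 + D\<^sup>2) / D\<^sup>2"
    using assms by (simp add: field_simps power2_eq_square)
  then have "sqrt ((2 * x / D)\<^sup>2 + 1) = sqrt (4 * x\<^sup>2 + D\<^sup>2) / D"
    using assms by (simp add: real_sqrt_divide)
  then show ?thesis
    using assms pos by (auto intro!: derivative_eq_intros simp: field_simps)
qed

lemma grad_separable:
  fixes f f' :: "'d::finite \<Rightarrow> real \<Rightarrow> real" and \<theta> :: "real^'d"
  assumes "\<And>i. (f i has_real_derivative f' i (\<theta> $ i)) (at (\<theta> $ i))"
  shows "grad (\<lambda>\<theta>. \<Sum>i\<in>UNIV. f i (\<theta> $ i)) \<theta> = (\<chi> i. f' i (\<theta> $ i))"
proof -
  have "((\<lambda>s. \<Sum>i\<in>UNIV. f i ((\<theta> + s *\<^sub>R axis j 1) $ i)) has_real_derivative f' j (\<theta> $ j)) (at 0)" for j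
  proof -
    have split: "(\<Sum>i\<in>UNIV. f i ((\<theta> + s *\<^sub>R axis j 1) $ i))
        = f j (s + \<theta> $ j) + (\<Sum>i\<in>UNIV - {j}. f i (\<theta> $ i))" for s
      by (simp add: sum.remove[of UNIV j] axis_def add.commute)
    have "((\<lambda>s. f j (s + \<theta> $ j)) has_real_derivative f' j (\<theta> $ j)) (at 0)"
      using assms[of j] DERIV_shift[of "f j" _ 0 "\<theta> $ j"] by simp
    then show ?thesis unfolding split by (auto intro!: derivative_eq_intros)
  qed
  then show ?thesis
    by (simp add: grad_def DERIV_imp_deriv vec_eq_iff)
qed

lemma grad_hyp_entropy_minus_inner:
  fixes D p \<theta> :: "real^'d"
  assumes "\<forall>i. D $ i > 0"
  shows "grad (\<lambda>\<theta>. hyp_entropy D \<theta> - inner p \<theta>) \<theta> = (\<chi> i. arsinh (2 * \<theta> $ i / D $ i) / 2 - p $ i)"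
proof -
  define f where "f i x = (2 * x * arsinh (2 * x / D $ i) - sqrt (4 * x\<^sup>2 + (D $ i)\<^sup>2) + D $ i) / 4 - p $ i * x"
    for i x
  have "(\<lambda>\<theta>. hyp_entropy D \<theta> - inner p \<theta>) = (\<lambda>\<theta>. \<Sum>i\<in>UNIV. f i (\<theta> $ i))"
    by (simp add: fun_eq_iff f_def hyp_entropy_def inner_vec_def sum_subtractf sum_divide_distrib)
  moreover have "(f i has_real_derivative arsinh (2 * \<theta> $ i / D $ i) / 2 - p $ i) (at (\<theta> $ i))" for i
  proof -
    have "D $ i > 0" using assms by simp
    from DERIV_diff[OF DERIV_cdivide[OF hyp_entropy_term_has_real_derivative[OF this, of "\<theta> $ i"], of 4]
        DERIV_cmult_Id[of "p $ i"]]
    show ?thesis unfolding f_def by simp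
  qed
  ultimately show ?thesis
    using grad_separable[of f "\<lambda>i x. arsinh (2 * x / D $ i) / 2 - p $ i"] by simp
qed

lemma arsinh_ratio_eq_ln_diff:
  fixes a b :: real
  assumes "a > 0" "b > 0"
  shows "arsinh ((a\<^sup>2 - b\<^sup>2) / (2 * (a * b))) = ln a - ln b"
proof -
  have "sinh (ln a - ln b) = (a\<^sup>2 - b\<^sup>2) / (2 * (a * b))"
    using assms by (simp add: sinh_def exp_diff exp_minus field_simps power2_eq_square)
  then show ?thesis by (metis arsinh_sinh_real)
qed

lemma arsinh_reweighted_eq_ln:
  fixes u v x :: real
  assumes "u\<^sup>2 \<noteq> v\<^sup>2"
  shows "arsinh ((((u + v) * exp (- x))\<^sup>2 - ((u - v) * exp x)\<^sup>2) / (2 * \<bar>u\<^sup>2 - v\<^sup>2\<bar>))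
    = ln \<bar>u + v\<bar> - ln \<bar>u - v\<bar> - 2 * x"
proof -
  define a where "a = \<bar>u + v\<bar> * exp (- x)"
  define b where "b = \<bar>u - v\<bar> * exp x"
  have "\<bar>u\<^sup>2 - v\<^sup>2\<bar> = \<bar>u + v\<bar> * \<bar>u - v\<bar>"
    by (simp add: abs_mult[symmetric] power2_eq_square algebra_simps)
  then have "\<bar>u\<^sup>2 - v\<^sup>2\<bar> = a * b"
    by (simp add: a_def b_def exp_minus field_simps)
  moreover have "((u + v) * exp (- x))\<^sup>2 = a\<^sup>2" "((u - v) * exp x)\<^sup>2 = b\<^sup>2"
    by (simp_all add: a_def b_def power_mult_distrib)
  moreover have "(u + v) * (u - v) \<noteq> 0"
    using assms by (simp add: power2_eq_square algebra_simps)
  then have "\<bar>u + v\<bar> > 0" "\<bar>u - v\<bar> > 0"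
    by auto
  then have "a > 0" "b > 0" "ln a - ln b = ln \<bar>u + v\<bar> - ln \<bar>u - v\<bar> - 2 * x"
    by (simp_all add: a_def b_def ln_mult)
  ultimately show ?thesis
    by (simp add: arsinh_ratio_eq_ln_diff)
qed

lemma grad_Phi_eq_xi:
  assumes "\<forall>i. Delta u v t $ i > 0"
  shows "grad (Phi L lam u v t) (u t * v t) = xi L lam u v t"
proof -
  have "Phi L lam u v t = (\<lambda>\<theta>. hyp_entropy (Delta u v t) \<theta> - inner (phi L lam u v t) \<theta>)"
    by (simp add: fun_eq_iff Phi_def)
  then have grad_Phi: "grad (Phi L lam u v t) (u t * v t)
      = (\<chi> i. arsinh (2 * (u t $ i * v t $ i) / Delta u v t $ i) / 2 - phi L lam u v t $ i)"
    using grad_hyp_entropy_minus_inner[OF assms] by simp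
  have "arsinh (2 * (u t $ i * v t $ i) / Delta u v t $ i) / 2 - phi L lam u v t $ i = xi L lam u v t $ i"
    for i
  proof -
    have nz: "(u t $ i)\<^sup>2 \<noteq> (v t $ i)\<^sup>2"
      using assms by (auto simp: Delta_def)
    have "(((u t $ i + v t $ i) * exp (- 0))\<^sup>2 - ((u t $ i - v t $ i) * exp 0)\<^sup>2)
        / (2 * \<bar>(u t $ i)\<^sup>2 - (v t $ i)\<^sup>2\<bar>) = 2 * (u t $ i * v t $ i) / Delta u v t $ i"
      by (simp add: Delta_def power2_eq_square algebra_simps)
    then show ?thesis
      using arsinh_reweighted_eq_ln[OF nz, of 0] arsinh_reweighted_eq_ln[OF nz, of "xi L lam u v t $ i"]
      by (simp add: phi_def alpha_plus_def alpha_minus_def Delta_def field_simps)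
  qed
  then show ?thesis
    by (simp add: grad_Phi vec_eq_iff)
qed

lemma integral_has_vector_derivative_atLeast:
  fixes h :: "real \<Rightarrow> 'a::banach"
  assumes "continuous_on {a..} h" "t \<ge> a"
  shows "((\<lambda>s. integral {a..s} h) has_vector_derivative h t) (at t within {a..})"
proof -
  have "((\<lambda>s. integral {a..s} h) has_vector_derivative h t) (at t within {a..t+1})"
    using assms by (intro integral_has_vector_derivative) (auto intro: continuous_on_subset)
  moreover have "at t within {a..t+1} = at t within {a..}"
    by (rule at_within_nhd[where S="{t - 1 <..< t + 1}"]) auto
  ultimately show ?thesis by simp
qed

lemma integral_exp_kernel_split:
  fixes g :: "real \<Rightarrow> 'a::euclidean_space"
  assumes "continuous_on {0..t} g"
  shows "integral {0..t} (\<lambda>s. (1 - exp (- (t - s) / lam)) *\<^sub>R g s)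
     = integral {0..t} g - exp (- t / lam) *\<^sub>R integral {0..t} (\<lambda>s. exp (s / lam) *\<^sub>R g s)"
proof -
  have "(\<lambda>s. (1 - exp (- (t - s) / lam)) *\<^sub>R g s)
      = (\<lambda>s. g s - exp (- t / lam) *\<^sub>R (exp (s / lam) *\<^sub>R g s))"
    by (simp add: fun_eq_iff scaleR_diff_left diff_divide_distrib flip: exp_add)
  moreover have "(\<lambda>s. exp (s / lam) *\<^sub>R g s) integrable_on {0..t}"
    using assms unfolding divide_inverse by (intro integrable_continuous_interval continuous_intros)
  ultimately show ?thesis
    using assms by (simp add: integral_diff integrable_continuous_interval del: scaleR_scaleR)
qed

lemma damped_integral_has_vector_derivative:
  fixes g :: "real \<Rightarrow> 'a::banach" and lam :: real
  defines "D \<equiv> \<lambda>t. exp (- t / lam) *\<^sub>R integral {0..t} (\<lambda>s. exp (s / lam) *\<^sub>R g s)"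
  assumes "continuous_on {0..} g" "t \<ge> 0"
  shows "(D has_vector_derivative g t - (1 / lam) *\<^sub>R D t) (at t within {0..})"
proof -
  have "continuous_on {0..} (\<lambda>s. exp (s / lam) *\<^sub>R g s)"
    using assms unfolding divide_inverse by (intro continuous_intros)
  from integral_has_vector_derivative_atLeast[OF this assms(3)]
  have "(D has_vector_derivative exp (- t / lam) *\<^sub>R (exp (t / lam) *\<^sub>R g t)
      + (- (1 / lam) * exp (- t / lam)) *\<^sub>R integral {0..t} (\<lambda>s. exp (s / lam) *\<^sub>R g s)) (at t within {0..})"
    unfolding D_def divide_inverse by (auto intro!: derivative_eq_intros)
  moreover have "exp (- t / lam) * exp (t / lam) = 1"
    by (simp flip: exp_add)
  ultimately show ?thesis
    by (simp add: D_def)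
qed

lemma kernel_integral_solves_momentum_ode:
  fixes g H :: "real \<Rightarrow> 'a::euclidean_space"
  assumes lam: "lam \<noteq> 0" and g: "continuous_on {0..} g" and T: "T \<ge> 0"
    and H: "\<And>t. t \<ge> T \<Longrightarrow> H t = - integral {0..t} (\<lambda>s. (1 - exp (- (t - s) / lam)) *\<^sub>R g s)"
  shows "\<exists>G' G''. \<forall>t\<ge>T. (H has_vector_derivative G' t) (at t within {T..}) \<and>
      (G' has_vector_derivative G'' t) (at t within {T..}) \<and> lam *\<^sub>R G'' t + G' t + g t = 0"
proof -
  define D where "D t = exp (- t / lam) *\<^sub>R integral {0..t} (\<lambda>s. exp (s / lam) *\<^sub>R g s)" for t
  define G' where "G' t = - (1 / lam) *\<^sub>R D t" for t
  define G'' where "G'' t = - (1 / lam) *\<^sub>R (g t - (1 / lam) *\<^sub>R D t)" for t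
  have dD: "(D has_vector_derivative g t - (1 / lam) *\<^sub>R D t) (at t within {T..})" if "t \<ge> T" for t
    using damped_integral_has_vector_derivative[OF g, of t lam] that T
    by (auto simp: D_def[abs_def] intro: has_vector_derivative_within_subset)
  have dA: "((\<lambda>t. integral {0..t} g) has_vector_derivative g t) (at t within {T..})" if "t \<ge> T" for t
    using integral_has_vector_derivative_atLeast[OF g, of t] that T
    by (auto intro: has_vector_derivative_within_subset)
  have H_eq: "H t = - integral {0..t} g + D t" if "t \<ge> T" for t
  proof -
    have "continuous_on {0..t} g"
      using g by (rule continuous_on_subset) auto
    then show ?thesis
      using H[OF that] integral_exp_kernel_split[of t g lam] by (simp add: D_def)
  qed
  have "(H has_vector_derivative G' t) (at t within {T..})" if "t \<ge> T" for t
  proof (rule has_vector_derivative_transform)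
    show "((\<lambda>t. - integral {0..t} g + D t) has_vector_derivative G' t) (at t within {T..})"
      using has_vector_derivative_add[OF has_vector_derivative_minus[OF dA] dD, OF that that]
      by (simp add: G'_def)
  qed (use that H_eq in auto)
  moreover have "(G' has_vector_derivative G'' t) (at t within {T..})" if "t \<ge> T" for t
    using has_vector_derivative_scaleR[OF DERIV_const[of "- (1 / lam)"] dD[OF that]]
    by (simp add: G'_def[abs_def] G''_def)
  moreover have "lam *\<^sub>R G'' t + G' t + g t = 0" for t
    using lam by (simp add: G'_def G''_def algebra_simps)
  ultimately show ?thesis
    by blast
qed

lemma momentum_mirror_flow_from_if_Delta_pos:
  assumes "lam \<noteq> 0" "T \<ge> 0"
    and "continuous_on {0..} (\<lambda>s. grad L (u s * v s))"
    and "\<And>t. t \<ge> T \<Longrightarrow> \<forall>i. Delta u v t $ i > 0"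
  shows "momentum_mirror_flow_from L lam u v T"
  unfolding momentum_mirror_flow_from_def
  using assms by (intro kernel_integral_solves_momentum_ode) (auto simp: grad_Phi_eq_xi xi_def)

lemma grad_sqloss:
  fixes X :: "real^'d^'n" and y :: "real^'n"
  shows "grad (sqloss X y) \<theta> = (\<chi> j. - (1 / real CARD('n)) * (\<Sum>i\<in>UNIV. (y $ i - inner (X $ i) \<theta>) * X $ i $ j))"
proof -
  have "((\<lambda>s. sqloss X y (\<theta> + s *\<^sub>R axis j 1)) has_real_derivative
      - (1 / real CARD('n)) * (\<Sum>i\<in>UNIV. (y $ i - inner (X $ i) \<theta>) * X $ i $ j)) (at 0)" for j
  proof -
    have "((\<lambda>s. \<Sum>i\<in>UNIV. (y $ i - inner (X $ i) \<theta> - s * X $ i $ j)\<^sup>2) has_real_derivative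
        (\<Sum>i\<in>UNIV. - 2 * ((y $ i - inner (X $ i) \<theta>) * X $ i $ j))) (at 0)"
      by (auto intro!: derivative_eq_intros sum.cong)
    then have "((\<lambda>s. (\<Sum>i\<in>UNIV. (y $ i - inner (X $ i) \<theta> - s * X $ i $ j)\<^sup>2) / (2 * real CARD('n)))
        has_real_derivative (\<Sum>i\<in>UNIV. - 2 * ((y $ i - inner (X $ i) \<theta>) * X $ i $ j)) / (2 * real CARD('n)))
        (at 0)"
      by (rule DERIV_cdivide)
    moreover have "sqloss X y (\<theta> + s *\<^sub>R axis j 1)
        = (\<Sum>i\<in>UNIV. (y $ i - inner (X $ i) \<theta> - s * X $ i $ j)\<^sup>2) / (2 * real CARD('n))" for s
      by (simp add: sqloss_def inner_add_right inner_axis algebra_simps)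
    moreover have "(\<Sum>i\<in>UNIV. - 2 * ((y $ i - inner (X $ i) \<theta>) * X $ i $ j)) / (2 * real CARD('n))
        = - (1 / real CARD('n)) * (\<Sum>i\<in>UNIV. (y $ i - inner (X $ i) \<theta>) * X $ i $ j)"
      by (simp add: sum_negf sum_distrib_left[symmetric])
    ultimately show ?thesis
      by simp
  qed
  then show ?thesis
    by (simp add: grad_def DERIV_imp_deriv vec_eq_iff)
qed

lemma continuous_on_grad_sqloss:
  fixes X :: "real^'d^'n" and y :: "real^'n"
  assumes "continuous_on S \<theta>"
  shows "continuous_on S (\<lambda>s. grad (sqloss X y) (\<theta> s))"
  unfolding grad_sqloss using assms by (intro continuous_intros)

lemma eventually_Delta_pos:
  assumes "(Delta u v \<longlongrightarrow> Dinf) at_top" "\<forall>i. Dinf $ i \<noteq> 0"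
  shows "eventually (\<lambda>t. \<forall>i. Delta u v t $ i > 0) at_top"
proof (rule eventually_all_finite)
  fix i
  have lim: "((\<lambda>t. Delta u v t $ i) \<longlongrightarrow> Dinf $ i) at_top"
    using assms(1) by (rule tendsto_vec_nth)
  then have "Dinf $ i \<ge> 0"
    by (rule tendsto_lowerbound) (auto simp: Delta_def)
  with assms(2) have "Dinf $ i > 0"
    by (simp add: order_le_less)
  with lim show "eventually (\<lambda>t. Delta u v t $ i > 0) at_top"
    by (rule order_tendstoD(1))
qed

theorem proposition4:
  fixes X :: "real^'d^'n" and y :: "real^'n" and lam :: real
    and u v u' v' u'' v'' :: "real \<Rightarrow> real^'d" and Dinf :: "real^'d"
  assumes lam_pos: "lam > 0"
    and du: "\<And>t. t \<ge> 0 \<Longrightarrow> (u has_vector_derivative u' t) (at t within {0..})"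
    and dv: "\<And>t. t \<ge> 0 \<Longrightarrow> (v has_vector_derivative v' t) (at t within {0..})"
    and ddu: "\<And>t. t \<ge> 0 \<Longrightarrow> (u' has_vector_derivative u'' t) (at t within {0..})"
    and ddv: "\<And>t. t \<ge> 0 \<Longrightarrow> (v' has_vector_derivative v'' t) (at t within {0..})"
    and ode_u: "\<And>t. t \<ge> 0 \<Longrightarrow> lam *\<^sub>R u'' t + u' t + grad (sqloss X y) (u t * v t) * v t = 0"
    and ode_v: "\<And>t. t \<ge> 0 \<Longrightarrow> lam *\<^sub>R v'' t + v' t + grad (sqloss X y) (u t * v t) * u t = 0"
    and init_vel: "u' 0 = 0" "v' 0 = 0"
    and init_bal: "\<forall>i. Delta u v 0 $ i \<noteq> 0"
    and bounded_traj: "bounded (u ` {0..})" "bounded (v ` {0..})"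
    and Dinf_lim: "(Delta u v \<longlongrightarrow> Dinf) at_top"
    and Dinf_nz: "\<forall>i. Dinf $ i \<noteq> 0"
  shows "(\<exists>T\<ge>0. (\<forall>t\<ge>T. \<forall>i. Delta u v t $ i > 0) \<and> momentum_mirror_flow_from (sqloss X y) lam u v T)
       \<and> ((\<forall>t\<ge>0. \<forall>i. Delta u v t $ i \<noteq> 0) \<longrightarrow> momentum_mirror_flow_from (sqloss X y) lam u v 0)"
proof -
  have "continuous_on {0..} u" "continuous_on {0..} v"
    using du dv by (auto simp: continuous_on_eq_continuous_within intro: has_vector_derivative_continuous)
  moreover have theta_eq: "(\<lambda>s. u s * v s) = (\<lambda>s. \<chi> i. u s $ i * v s $ i)"
    by (simp add: fun_eq_iff vec_eq_iff)
  ultimately have "continuous_on {0..} (\<lambda>s. u s * v s)"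
    unfolding theta_eq by (intro continuous_intros)
  then have grad_cont: "continuous_on {0..} (\<lambda>s. grad (sqloss X y) (u s * v s))"
    by (rule continuous_on_grad_sqloss)
  obtain N where N: "\<And>t. t \<ge> N \<Longrightarrow> \<forall>i. Delta u v t $ i > 0"
    using eventually_Delta_pos[OF Dinf_lim Dinf_nz] by (auto simp: eventually_at_top_linorder)
  have "momentum_mirror_flow_from (sqloss X y) lam u v (max N 0)"
    using lam_pos grad_cont N by (intro momentum_mirror_flow_from_if_Delta_pos) auto
  moreover have "momentum_mirror_flow_from (sqloss X y) lam u v 0"
    if "\<forall>t\<ge>0. \<forall>i. Delta u v t $ i \<noteq> 0"
    using lam_pos grad_cont that
    by (intro momentum_mirror_flow_from_if_Delta_pos) (auto simp: Delta_def)
  ultimately show ?thesis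
    using N by (metis max.cobounded2 max.boundedE)
qed

end
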